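(* Let $n$ be a positive integer. If $\Phi(n)^{\Phi(n)}\equiv 1\pmod n$ or $\Lambda(n)^{\Lambda(n)}\equiv 1 \pmod n$, then $n$ is $G$-cyclic.
   Context: For a positive integer $n$, $\mathcal{G}_n=\{a+bi\in\mathbb{Z}[i]/n\mathbb{Z}[i] : a^2+b^2\equiv 1\pmod n\}$ (a multiplicative group), $\Phi(n)=|\mathcal{G}_n|$, and $\Lambda(n)$ is the exponent of $\mathcal{G}_n$. An integer $n\ge 1$ is $G$-cyclic if $\gcd(\Phi(n),n)=1$. *)

theory Defs
  imports "HOL-Number_Theory.Number_Theory"
begin

text \<open>Elements of Z[i]/nZ[i] are represented by pairs (a,b) of residues
  a,b in {0..<n}, standing for a + b i.\<close>

definition gmul :: "int \<Rightarrow> int \<times> int \<Rightarrow> int \<times> int \<Rightarrow> int \<times> int" where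
  "gmul n x y = ((fst x * fst y - snd x * snd y) mod n,
                 (fst x * snd y + snd x * fst y) mod n)"

definition gone :: "int \<Rightarrow> int \<times> int" where
  "gone n = (1 mod n, 0)"

fun gpow :: "int \<Rightarrow> int \<times> int \<Rightarrow> nat \<Rightarrow> int \<times> int" where
  "gpow n x 0 = gone n"
| "gpow n x (Suc k) = gmul n x (gpow n x k)"

definition Gn :: "nat \<Rightarrow> (int \<times> int) set" where
  "Gn n = {(a, b). 0 \<le> a \<and> a < int n \<and> 0 \<le> b \<and> b < int n \<and>
                   [a^2 + b^2 = 1] (mod int n)}"

definition Phi :: "nat \<Rightarrow> nat" where
  "Phi n = card (Gn n)"

definition Lambda :: "nat \<Rightarrow> nat" where
  "Lambda n = (LEAST k. 0 < k \<and> (\<forall>g\<in>Gn n. gpow (int n) g k = gone (int n)))"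

definition G_cyclic :: "nat \<Rightarrow> bool" where
  "G_cyclic n \<longleftrightarrow> 1 \<le> n \<and> gcd (Phi n) n = 1"

end

theory Submission
  imports Defs "HOL-Algebra.Sylow" "HOL-Algebra.Multiplicative_Group"
begin

text \<open>If \<open>a\<^sup>a \<equiv> 1 (mod n)\<close> then \<open>a\<close> is a unit modulo \<open>n\<close>. This settles the hypothesis on
  \<open>\<Phi>(n)\<close> directly. For \<open>\<Lambda>(n)\<close> one uses that every prime \<open>p\<close> dividing the group order
  \<open>\<Phi>(n)\<close> is the order of some element (Cauchy's theorem, here obtained from Sylow's
  theorem), hence divides the exponent \<open>\<Lambda>(n)\<close>; so \<open>\<Phi>(n)\<close> and \<open>\<Lambda>(n)\<close> have the same
  prime divisors and coprimality with \<open>n\<close> transfers from \<open>\<Lambda>(n)\<close> to \<open>\<Phi>(n)\<close>.\<close>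

lemma coprime_if_power_self_cong_1:
  fixes a n :: nat
  assumes "[a ^ a = 1] (mod n)" and "0 < a"
  shows "coprime a n"
proof -
  have "coprime (a ^ a) n"
    using cong_imp_coprime[OF cong_sym[OF assms(1)]] by simp
  then show ?thesis
    using assms(2) by simp
qed

lemma (in group) exists_elem_of_prime_order:
  assumes "finite (carrier G)" and "prime p" and "p dvd order G"
  obtains g where "g \<in> carrier G" and "ord g = p"
proof -
  obtain m where "order G = p ^ 1 * m"
    using assms(3) by auto
  then obtain H where H: "subgroup H G" "card H = p"
    using sylow_thm[OF assms(2) is_group _ assms(1)] by (metis power_one_right)
  interpret H: group "G\<lparr>carrier := H\<rparr>"
    using subgroup.subgroup_is_group[OF H(1) is_group] .
  have "\<not> H \<subseteq> {\<one>}"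
    using card_mono[of "{\<one>}" H] H(2) prime_gt_1_nat[OF assms(2)] by auto
  then obtain g where g: "g \<in> H" "g \<noteq> \<one>"
    by blast
  have g_carrier: "g \<in> carrier G"
    using H(1) g(1) subgroup.subset by blast
  have "g [^]\<^bsub>G\<lparr>carrier := H\<rparr>\<^esub> order (G\<lparr>carrier := H\<rparr>) = \<one>"
    using H.pow_order_eq_1[of g] g(1) by simp
  then have "g [^] p = \<one>"
    using H(2) by (simp add: order_def flip: nat_pow_consistent)
  then have "ord g dvd p"
    using pow_eq_id[OF g_carrier] by simp
  moreover have "ord g \<noteq> 1"
    using ord_eq_1[OF g_carrier] g(2) by simp
  ultimately have "ord g = p"
    using assms(2) by (auto simp: prime_nat_iff)
  with g_carrier show thesis
    by (rule that)
qed

lemma (in group) prime_dvd_order_imp_dvd_exponent: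
  assumes "finite (carrier G)" and "prime p" and "p dvd order G"
    and "\<forall>g\<in>carrier G. g [^] e = \<one>"
  shows "p dvd e"
proof -
  obtain g where "g \<in> carrier G" "ord g = p"
    using exists_elem_of_prime_order[OF assms(1-3)] .
  then show ?thesis
    using assms(4) pow_eq_id by auto
qed

lemma sum_squares_mod_cong:
  fixes a b m :: int
  shows "[(a mod m)\<^sup>2 + (b mod m)\<^sup>2 = a\<^sup>2 + b\<^sup>2] (mod m)"
  by (intro cong_add cong_pow) (auto simp: cong_def)

lemma gmul_comm: "gmul m x y = gmul m y x"
  by (simp add: gmul_def algebra_simps)

lemma gmul_mod_left: "gmul m (a mod m, b mod m) y = gmul m (a, b) y"
proof -
  have "[(a mod m) * c - (b mod m) * d = a * c - b * d] (mod m)"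
       "[(a mod m) * d + (b mod m) * c = a * d + b * c] (mod m)" for c d
    by (intro cong_diff cong_add cong_mult cong_refl; simp add: cong_def)+
  then show ?thesis
    by (cases y) (simp add: gmul_def cong_def)
qed

lemma gmul_assoc: "gmul m (gmul m x y) z = gmul m x (gmul m y z)"
proof -
  have "gmul m (gmul m x y) z
      = gmul m (fst x * fst y - snd x * snd y, fst x * snd y + snd x * fst y) z"
    by (simp add: gmul_def[of m x y] gmul_mod_left)
  also have "\<dots> = gmul m x (fst y * fst z - snd y * snd z, fst y * snd z + snd y * fst z)"
    by (simp add: gmul_def algebra_simps)
  also have "\<dots> = gmul m x (gmul m y z)"
    by (metis gmul_comm gmul_def[of m y z] gmul_mod_left)
  finally show ?thesis .
qed

lemma gmul_closed:
  assumes "0 < n" and "x \<in> Gn n" and "y \<in> Gn n"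
  shows "gmul (int n) x y \<in> Gn n"
proof -
  obtain a b c d where xy: "x = (a, b)" "y = (c, d)"
    by (cases x, cases y)
  have "[(a\<^sup>2 + b\<^sup>2) * (c\<^sup>2 + d\<^sup>2) = 1 * 1] (mod int n)"
    using assms(2,3) xy by (intro cong_mult) (auto simp: Gn_def)
  moreover have "(a * c - b * d)\<^sup>2 + (a * d + b * c)\<^sup>2 = (a\<^sup>2 + b\<^sup>2) * (c\<^sup>2 + d\<^sup>2)"
    by (simp add: power2_eq_square algebra_simps)
  ultimately have "[(a * c - b * d)\<^sup>2 + (a * d + b * c)\<^sup>2 = 1] (mod int n)"
    by simp
  then have "[((a * c - b * d) mod int n)\<^sup>2 + ((a * d + b * c) mod int n)\<^sup>2 = 1] (mod int n)"
    by (rule cong_trans[OF sum_squares_mod_cong])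
  then show ?thesis
    using assms(1) by (simp add: Gn_def gmul_def xy)
qed

lemma gone_in_Gn: "0 < n \<Longrightarrow> gone (int n) \<in> Gn n"
  by (simp add: Gn_def gone_def cong_def power_mod)

lemma gmul_gone_left: "x \<in> Gn n \<Longrightarrow> gmul (int n) (gone (int n)) x = x"
  by (cases x) (simp add: Gn_def gmul_def gone_def mod_simps)

text \<open>The inverse of \<open>a + bi\<close> is its conjugate \<open>a - bi\<close>.\<close>

lemma gmul_inverse_exists:
  assumes "0 < n" and "x \<in> Gn n"
  shows "\<exists>y\<in>Gn n. gmul (int n) y x = gone (int n)"
proof -
  obtain a b where x: "x = (a, b)"
    by (cases x)
  have a: "0 \<le> a" "a < int n" and norm: "[a\<^sup>2 + b\<^sup>2 = 1] (mod int n)"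
    using assms(2) x by (auto simp: Gn_def)
  then have a_mod: "a mod int n = a"
    by simp
  have "[(a mod int n)\<^sup>2 + ((- b) mod int n)\<^sup>2 = 1] (mod int n)"
    using sum_squares_mod_cong[of a "int n" "- b"] norm by (auto intro: cong_trans)
  then have conj: "(a, (- b) mod int n) \<in> Gn n"
    using assms(1) a a_mod by (simp add: Gn_def)
  have "gmul (int n) (a mod int n, (- b) mod int n) x = ((a\<^sup>2 + b\<^sup>2) mod int n, 0)"
    by (simp only: gmul_mod_left) (simp add: gmul_def x power2_eq_square)
  also have "\<dots> = gone (int n)"
    using norm by (simp add: gone_def cong_def)
  finally show ?thesis
    using conj a_mod by auto
qed

definition Gn_group :: "nat \<Rightarrow> (int \<times> int) monoid" where
  "Gn_group n = \<lparr>carrier = Gn n, mult = gmul (int n), one = gone (int n)\<rparr>"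

lemma group_Gn_group: "0 < n \<Longrightarrow> group (Gn_group n)"
  by (rule groupI)
    (simp_all add: Gn_group_def gmul_closed gone_in_Gn gmul_assoc gmul_gone_left
      gmul_inverse_exists)

lemma finite_Gn: "finite (Gn n)"
  by (rule finite_subset[of _ "{0..<int n} \<times> {0..<int n}"]) (auto simp: Gn_def)

lemma order_Gn_group: "order (Gn_group n) = Phi n"
  by (simp add: order_def Gn_group_def Phi_def)

lemma Gn_group_pow: "x [^]\<^bsub>Gn_group n\<^esub> k = gpow (int n) x k"
  by (induction k) (simp_all add: Gn_group_def gmul_comm)

lemma Phi_pos: "0 < n \<Longrightarrow> 0 < Phi n"
  using gone_in_Gn finite_Gn by (auto simp: Phi_def card_gt_0_iff)

lemma Lambda_pos_and_gpow_Lambda: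
  assumes "0 < n"
  shows "0 < Lambda n \<and> (\<forall>g\<in>Gn n. gpow (int n) g (Lambda n) = gone (int n))"
proof -
  interpret group "Gn_group n"
    using group_Gn_group[OF assms] .
  have "\<forall>g\<in>Gn n. gpow (int n) g (Phi n) = gone (int n)"
    using pow_order_eq_1 by (simp add: Gn_group_pow order_Gn_group) (simp add: Gn_group_def)
  with Phi_pos[OF assms] have "0 < Phi n \<and> (\<forall>g\<in>Gn n. gpow (int n) g (Phi n) = gone (int n))" ..
  then show ?thesis
    unfolding Lambda_def by (rule LeastI)
qed

lemma prime_dvd_Phi_imp_dvd_Lambda:
  assumes "0 < n" and "prime p" and "p dvd Phi n"
  shows "p dvd Lambda n"
proof -
  interpret group "Gn_group n"
    using group_Gn_group[OF assms(1)] .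
  show ?thesis
  proof (rule prime_dvd_order_imp_dvd_exponent)
    show "finite (carrier (Gn_group n))"
      by (simp add: Gn_group_def finite_Gn)
    show "p dvd order (Gn_group n)"
      using assms(3) by (simp add: order_Gn_group)
    show "\<forall>g\<in>carrier (Gn_group n). g [^]\<^bsub>Gn_group n\<^esub> Lambda n = \<one>\<^bsub>Gn_group n\<^esub>"
      using Lambda_pos_and_gpow_Lambda[OF assms(1)] by (simp add: Gn_group_pow) (simp add: Gn_group_def)
  qed (rule assms(2))
qed

lemma coprime_Phi_if_coprime_Lambda:
  assumes "0 < n" and "coprime (Lambda n) n"
  shows "coprime (Phi n) n"
proof (rule ccontr)
  assume "\<not> coprime (Phi n) n"
  then obtain p where p: "prime p" "p dvd gcd (Phi n) n"
    using prime_factor_nat unfolding coprime_iff_gcd_eq_1 by blast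
  then have "p dvd Lambda n" and "p dvd n"
    using prime_dvd_Phi_imp_dvd_Lambda[OF assms(1)] by simp_all
  then have "is_unit p"
    by (rule coprime_common_divisor[OF assms(2)])
  with p(1) show False
    by (simp add: not_prime_unit)
qed

theorem mainTheorem13:
  fixes n :: nat
  assumes "0 < n"
    and "[Phi n ^ Phi n = 1] (mod n) \<or> [Lambda n ^ Lambda n = 1] (mod n)"
  shows "G_cyclic n"
proof -
  have "coprime (Phi n) n"
    using assms(2)
  proof
    assume "[Phi n ^ Phi n = 1] (mod n)"
    then show ?thesis
      using Phi_pos[OF assms(1)] by (rule coprime_if_power_self_cong_1)
  next
    assume "[Lambda n ^ Lambda n = 1] (mod n)"
    moreover have "0 < Lambda n"
      using Lambda_pos_and_gpow_Lambda[OF assms(1)] by (rule conjunct1)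
    ultimately have "coprime (Lambda n) n"
      by (rule coprime_if_power_self_cong_1)
    then show ?thesis
      by (rule coprime_Phi_if_coprime_Lambda[OF assms(1)])
  qed
  then have "gcd (Phi n) n = 1"
    by (rule coprime_iff_gcd_eq_1[THEN iffD1])
  with assms(1) show ?thesis
    unfolding G_cyclic_def by simp
qed

end
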